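(* Let $E$ be an exact Courant algebroid over $M$ with a generalized Riemannian metric $g_\tau$, and identify $T^*M$ with $\rho^*(T^*M)\subset E$. For real maximally isotropic subbundles $D,D'\subset E$ let $S,S'\in\Gamma(\mathrm{End}\,T^*M)$ be the unique endomorphisms such that $D_x=\{(1+\tau)\eta+(1-\tau)S\eta:\eta\in T^*_xM\}$ and $D'_x=\{(1+\tau)\eta+(1-\tau)S'\eta:\eta\in T^*_xM\}$ for all $x\in M$ (these operators are invertible). Then $D\cap D'=\{0\}$ if and only if $S^{-1}S'-1$ is nondegenerate (at every point).
   Context: A Courant algebroid is a vector bundle $E\to M$ with anchor $\rho\colon E\to TM$, bracket on $\Gamma(E)$ and nondegenerate symmetric fiber metric $(\cdot,\cdot)$ satisfying: $[\psi,f\psi']=f[\psi,\psi']+(\rho(\psi)f)\psi'$; $[\psi_1,[\psi_2,\psi_3]]=[[\psi_1,\psi_2],\psi_3]+[\psi_2,[\psi_1,\psi_3]]$; $\rho(\psi_1)(\psi_2,\psi_3)=([\psi_1,\psi_2],\psi_3)+(\psi_2,[\psi_1,\psi_3])$; $([\psi,\psi],\psi')=\tfrac12\rho(\psi')(\psi,\psi)$. With $\rho^*\colon T^*M\to E$ defined by $(\rho^*\alpha,\psi)=\langle\alpha,\rho(\psi)\rangle$, $E$ is exact if $0\to T^*M\to E\to TM\to 0$ is exact. A generalized Riemannian metric is a positive definite fiber metric $g_\tau(\psi_1,\psi_2)=(\tau\psi_1,\psi_2)$ with $\tau\in\Gamma(\mathrm{End}\,E)$, $\tau^2=1$. A subbundle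 is maximally isotropic if isotropic for $(\cdot,\cdot)$ and of maximal rank. *)

theory Defs
  imports "HOL-Analysis.Analysis"
begin

text \<open>The fibre of E at a
point is modelled by a finite-dimensional real space 'e, the fibre of TM by 'a, and the
fibre of T*M by 'a as well, with the duality pairing given by the inner product
(alpha, v) maps to alpha \<bullet> v.\<close>

definition nondeg_sym_bilinear :: "('e::euclidean_space \<Rightarrow> 'e \<Rightarrow> real) \<Rightarrow> bool" where
  "nondeg_sym_bilinear B \<longleftrightarrow>
     (\<forall>u. linear (B u)) \<and> (\<forall>u v. B u v = B v u) \<and>
     (\<forall>u. (\<forall>v. B u v = 0) \<longrightarrow> u = 0)"

definition anchor_dual ::
  "('e::euclidean_space \<Rightarrow> 'e \<Rightarrow> real) \<Rightarrow> ('e \<Rightarrow> 'a::euclidean_space) \<Rightarrow> 'a \<Rightarrow> 'e" where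
  "anchor_dual B rho alpha = (THE e. \<forall>psi. B e psi = alpha \<bullet> rho psi)"

definition isotropic :: "('e::euclidean_space \<Rightarrow> 'e \<Rightarrow> real) \<Rightarrow> 'e set \<Rightarrow> bool" where
  "isotropic B W \<longleftrightarrow> subspace W \<and> (\<forall>u\<in>W. \<forall>v\<in>W. B u v = 0)"

definition max_isotropic :: "('e::euclidean_space \<Rightarrow> 'e \<Rightarrow> real) \<Rightarrow> 'e set \<Rightarrow> bool" where
  "max_isotropic B D \<longleftrightarrow> isotropic B D \<and> (\<forall>W. isotropic B W \<longrightarrow> dim W \<le> dim D)"

definition exact_fibre ::
  "('e::euclidean_space \<Rightarrow> 'e \<Rightarrow> real) \<Rightarrow> ('e \<Rightarrow> 'a::euclidean_space) \<Rightarrow> bool" where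
  "exact_fibre B rho \<longleftrightarrow>
     inj (anchor_dual B rho) \<and> surj rho \<and>
     range (anchor_dual B rho) = {psi. rho psi = 0}"

text \<open>Generalized Riemannian metric g_tau(psi1,psi2) = (tau psi1, psi2), tau^2 = 1,
positive definite (symmetric) fibre metric.\<close>
definition gen_riem_metric ::
  "('e::euclidean_space \<Rightarrow> 'e \<Rightarrow> real) \<Rightarrow> ('e \<Rightarrow> 'e) \<Rightarrow> bool" where
  "gen_riem_metric B tau \<longleftrightarrow>
     linear tau \<and> (\<forall>psi. tau (tau psi) = psi) \<and>
     (\<forall>u v. B (tau u) v = B (tau v) u) \<and>
     (\<forall>psi. psi \<noteq> 0 \<longrightarrow> B (tau psi) psi > 0)"

end

theory Submission
  imports Defs
begin

text \<open>Write \<open>A\<close> for \<open>\<rho>\<^sup>*\<close>.  By exactness \<open>A\<close> is injective with isotropic image, on which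
\<open>\<tau>\<close> is definite; hence \<open>\<eta> \<mapsto> (1 \<plusminus> \<tau>)A\<eta>\<close> are injective.  As \<open>(1+\<tau>)A\<eta>\<close> and \<open>(1-\<tau>)AS\<eta>\<close> are
the \<open>\<tau>\<close>-eigencomponents of the corresponding point of \<open>D\<close>, the parametrisations of \<open>D\<close> and
\<open>D'\<close> meet exactly at the \<open>\<eta>\<close> with \<open>S\<eta> = S'\<eta>\<close>, i.e. on \<open>ker (S\<inverse>S' - 1)\<close>.  Isotropy of \<open>D\<close>
forces \<open>S\<close> to be injective, and in finite dimension injective endomorphisms are bijective.\<close>

lemma nondeg_sym_bilinear_imp_bilinear:
  assumes "nondeg_sym_bilinear B"
  shows "bilinear B"
proof -
  have "linear (B u)" "B u v = B v u" for u v
    using assms unfolding nondeg_sym_bilinear_def by blast+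
  then show ?thesis
    unfolding bilinear_def by (metis ext)
qed

lemma nondeg_sym_bilinear_eq_0:
  "nondeg_sym_bilinear B \<Longrightarrow> (\<And>v. B u v = 0) \<Longrightarrow> u = 0"
  unfolding nondeg_sym_bilinear_def by blast

lemma nondeg_sym_bilinear_represents_linear:
  fixes B :: "'e::euclidean_space \<Rightarrow> 'e \<Rightarrow> real"
  assumes B: "nondeg_sym_bilinear B" and f: "linear f"
  shows "\<exists>e. \<forall>\<psi>. B e \<psi> = f \<psi>"
proof -
  have bil: "bilinear B"
    using B by (rule nondeg_sym_bilinear_imp_bilinear)
  \<comment> \<open>\<open>P e\<close> represents \<open>B e\<close> by the inner product; nondegeneracy makes \<open>P\<close> injective, hence onto.\<close>
  define P where "P e = adjoint (B e) 1" for e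
  have P: "\<psi> \<bullet> P e = B e \<psi>" for e \<psi>
    using adjoint_works[of "B e" \<psi> 1] bil by (simp add: P_def bilinear_def)
  have "linear P"
  proof (rule linearI)
    show "P (x + y) = P x + P y" for x y
      by (rule vector_eq_ldot[THEN iffD1]) (simp add: P inner_add_right bilinear_ladd[OF bil])
    show "P (c *\<^sub>R x) = c *\<^sub>R P x" for c x
      by (rule vector_eq_ldot[THEN iffD1]) (simp add: P bilinear_lmul[OF bil])
  qed
  moreover have "inj P"
    unfolding linear_injective_0[OF \<open>linear P\<close>]
    using P nondeg_sym_bilinear_eq_0[OF B] by (metis inner_zero_right)
  ultimately obtain e where e: "P e = adjoint f 1"
    by (metis linear_injective_imp_surjective surjD)
  have "B e \<psi> = f \<psi>" for \<psi>
    using P[of \<psi> e] adjoint_works[OF f, of \<psi> 1] e by simp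
  then show ?thesis by blast
qed

lemma anchor_dual_pairing:
  fixes B :: "'e::euclidean_space \<Rightarrow> 'e \<Rightarrow> real" and rho :: "'e \<Rightarrow> 'a::euclidean_space"
  assumes B: "nondeg_sym_bilinear B" and rho: "linear rho"
  shows "B (anchor_dual B rho \<alpha>) \<psi> = \<alpha> \<bullet> rho \<psi>"
proof -
  have "linear (\<lambda>\<psi>. \<alpha> \<bullet> rho \<psi>)"
    using rho by (simp add: linear_iff inner_add_right)
  then obtain e where e: "\<forall>\<psi>. B e \<psi> = \<alpha> \<bullet> rho \<psi>"
    using nondeg_sym_bilinear_represents_linear[OF B] by blast
  have uniq: "e' = e" if "\<forall>\<psi>. B e' \<psi> = \<alpha> \<bullet> rho \<psi>" for e'
    using nondeg_sym_bilinear_eq_0[OF B, of "e' - e"] that e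
    by (simp add: bilinear_lsub[OF nondeg_sym_bilinear_imp_bilinear[OF B]])
  have "anchor_dual B rho \<alpha> = e"
    unfolding anchor_dual_def using e uniq by (rule the_equality)
  then show ?thesis
    using e by simp
qed

lemma gen_riem_metric_isotropic_eigenvector:
  assumes B: "nondeg_sym_bilinear B" and tau: "gen_riem_metric B tau"
    and eigen: "tau p = p \<or> tau p = - p" and null: "B p p = 0"
  shows "p = 0"
proof (rule ccontr)
  assume "p \<noteq> 0"
  then have "B (tau p) p > 0"
    using tau unfolding gen_riem_metric_def by blast
  moreover have "B (- p) p = - B p p"
    using bilinear_lneg[OF nondeg_sym_bilinear_imp_bilinear[OF B]] .
  ultimately show False
    using eigen null by auto
qed

lemma involution_eigen_decomposition_unique:
  fixes tau :: "'e::real_vector \<Rightarrow> 'e"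
  assumes "linear tau" and "p + q = p' + q'"
    and "tau p = p" "tau p' = p'" "tau q = - q" "tau q' = - q'"
  shows "p = p' \<and> q = q'"
proof -
  have "p - q = tau (p + q)"
    using assms(1,3,5) by (simp add: linear_add)
  also have "\<dots> = p' - q'"
    using assms(1,2,4,6) by (simp add: linear_add)
  finally have "p - q = p' - q'" .
  then have "(p + q) + (p - q) = (p' + q') + (p' - q')"
    using assms(2) by simp
  then have "2 *\<^sub>R p = 2 *\<^sub>R p'"
    by (simp add: scaleR_2)
  then show ?thesis
    using assms(2) by simp
qed

lemma isotropic_add_tau_inj:
  assumes B: "nondeg_sym_bilinear B" and tau: "gen_riem_metric B tau"
    and W: "isotropic B W" and "u \<in> W" "v \<in> W"
    and eq: "u + tau u = v + tau v"
  shows "u = v"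
proof -
  have "u - v \<in> W"
    using W \<open>u \<in> W\<close> \<open>v \<in> W\<close> by (simp add: isotropic_def subspace_diff)
  then have "B (u - v) (u - v) = 0"
    using W by (simp add: isotropic_def)
  moreover have "tau (u - v) = - (u - v)"
    using tau eq by (simp add: gen_riem_metric_def linear_diff algebra_simps)
  ultimately have "u - v = 0"
    by (intro gen_riem_metric_isotropic_eigenvector[OF B tau]) auto
  then show ?thesis
    by simp
qed

lemma isotropic_diff_tau_inj:
  assumes B: "nondeg_sym_bilinear B" and tau: "gen_riem_metric B tau"
    and W: "isotropic B W" and "u \<in> W" "v \<in> W"
    and eq: "u - tau u = v - tau v"
  shows "u = v"
proof -
  have "u - v \<in> W"
    using W \<open>u \<in> W\<close> \<open>v \<in> W\<close> by (simp add: isotropic_def subspace_diff)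
  then have "B (u - v) (u - v) = 0"
    using W by (simp add: isotropic_def)
  moreover have "tau (u - v) = u - v"
    using tau eq by (simp add: gen_riem_metric_def linear_diff algebra_simps)
  ultimately have "u - v = 0"
    by (intro gen_riem_metric_isotropic_eigenvector[OF B tau]) auto
  then show ?thesis
    by simp
qed

lemma bij_inv_comp_minus_id_iff:
  fixes S S' :: "'a::euclidean_space \<Rightarrow> 'a"
  assumes S: "linear S" "inj S" and S': "linear S'"
  shows "bij (\<lambda>\<eta>. inv S (S' \<eta>) - \<eta>) \<longleftrightarrow> (\<forall>\<eta>. S \<eta> = S' \<eta> \<longrightarrow> \<eta> = 0)"
proof -
  define T where "T = (\<lambda>\<eta>. inv S (S' \<eta>) - \<eta>)"
  have "linear T"
    unfolding T_def using linear_compose[OF S' inj_linear_imp_inv_linear[OF S]]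
    by (intro linear_compose_sub) (auto simp: o_def linear_id[unfolded id_def])
  have "T \<eta> = 0 \<longleftrightarrow> S \<eta> = S' \<eta>" for \<eta>
    unfolding T_def using S(2)
    by (metis eq_iff_diff_eq_0 inv_f_f linear_injective_imp_surjective[OF S] surj_f_inv_f)
  then have "bij T \<longleftrightarrow> (\<forall>\<eta>. S \<eta> = S' \<eta> \<longrightarrow> \<eta> = 0)"
    using linear_injective_0[OF \<open>linear T\<close>] linear_injective_imp_surjective[OF \<open>linear T\<close>]
    by (auto simp: bij_def)
  then show ?thesis
    by (simp add: T_def)
qed

definition twisted_graph ::
  "('e::euclidean_space \<Rightarrow> 'e \<Rightarrow> real) \<Rightarrow> ('e \<Rightarrow> 'a::euclidean_space) \<Rightarrow> ('e \<Rightarrow> 'e) \<Rightarrow>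
    ('a \<Rightarrow> 'a) \<Rightarrow> 'a \<Rightarrow> 'e" where
  "twisted_graph B rho tau S \<eta> =
     (anchor_dual B rho \<eta> + tau (anchor_dual B rho \<eta>))
     + (anchor_dual B rho (S \<eta>) - tau (anchor_dual B rho (S \<eta>)))"

locale exact_courant_fibre =
  fixes B :: "'e::euclidean_space \<Rightarrow> 'e \<Rightarrow> real"
    and rho :: "'e \<Rightarrow> 'a::euclidean_space"
    and tau :: "'e \<Rightarrow> 'e"
  assumes nondeg: "nondeg_sym_bilinear B"
    and linear_rho: "linear rho"
    and exact: "exact_fibre B rho"
    and metric: "gen_riem_metric B tau"
begin

lemma inj_anchor_dual: "inj (anchor_dual B rho)"
  using exact by (simp add: exact_fibre_def)

lemma anchor_dual_0: "anchor_dual B rho 0 = 0"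
  using nondeg_sym_bilinear_eq_0[OF nondeg]
  by (simp add: anchor_dual_pairing[OF nondeg linear_rho])

lemma isotropic_range_anchor_dual: "isotropic B (range (anchor_dual B rho))"
  unfolding isotropic_def
proof
  have range_eq: "range (anchor_dual B rho) = {\<psi>. rho \<psi> = 0}"
    using exact by (simp add: exact_fibre_def)
  then show "subspace (range (anchor_dual B rho))"
    using linear_subspace_kernel[OF linear_rho] by simp
  show "\<forall>u\<in>range (anchor_dual B rho). \<forall>v\<in>range (anchor_dual B rho). B u v = 0"
  proof (intro ballI)
    fix u v
    assume "u \<in> range (anchor_dual B rho)" "v \<in> range (anchor_dual B rho)"
    moreover from \<open>v \<in> _\<close> have "rho v = 0"
      using range_eq by blast
    ultimately show "B u v = 0"
      by (auto simp: anchor_dual_pairing[OF nondeg linear_rho])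
  qed
qed

lemma linear_tau: "linear tau"
  using metric by (simp add: gen_riem_metric_def)

lemma tau_tau [simp]: "tau (tau \<psi>) = \<psi>"
  using metric by (simp add: gen_riem_metric_def)

lemma twisted_graph_eq_iff:
  "twisted_graph B rho tau S \<eta> = twisted_graph B rho tau S' \<eta>' \<longleftrightarrow> \<eta> = \<eta>' \<and> S \<eta> = S' \<eta>'"
proof
  let ?A = "anchor_dual B rho"
  assume "twisted_graph B rho tau S \<eta> = twisted_graph B rho tau S' \<eta>'"
  then have "?A \<eta> + tau (?A \<eta>) = ?A \<eta>' + tau (?A \<eta>')
      \<and> ?A (S \<eta>) - tau (?A (S \<eta>)) = ?A (S' \<eta>') - tau (?A (S' \<eta>'))"
    unfolding twisted_graph_def
    by (intro involution_eigen_decomposition_unique[OF linear_tau])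
      (simp_all add: linear_add[OF linear_tau] linear_diff[OF linear_tau])
  then have "?A \<eta> = ?A \<eta>' \<and> ?A (S \<eta>) = ?A (S' \<eta>')"
    using isotropic_add_tau_inj[OF nondeg metric isotropic_range_anchor_dual]
      isotropic_diff_tau_inj[OF nondeg metric isotropic_range_anchor_dual]
    by blast
  then show "\<eta> = \<eta>' \<and> S \<eta> = S' \<eta>'"
    using inj_anchor_dual by (auto dest: injD)
qed (auto simp: twisted_graph_def)

lemma twisted_graph_0: "linear S \<Longrightarrow> twisted_graph B rho tau S 0 = 0"
  by (simp add: twisted_graph_def linear_0 anchor_dual_0 linear_0[OF linear_tau])

lemma isotropic_range_twisted_graph_imp_inj:
  assumes S: "linear S" and iso: "isotropic B (range (twisted_graph B rho tau S))"
  shows "inj S"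
proof -
  have "\<eta> = 0" if "S \<eta> = 0" for \<eta>
  proof -
    let ?p = "twisted_graph B rho tau S \<eta>"
    have "?p = anchor_dual B rho \<eta> + tau (anchor_dual B rho \<eta>)"
      using that by (simp add: twisted_graph_def anchor_dual_0 linear_0[OF linear_tau])
    then have "tau ?p = ?p"
      by (simp add: linear_add[OF linear_tau])
    moreover have "B ?p ?p = 0"
      using iso by (simp add: isotropic_def)
    ultimately have "?p = twisted_graph B rho tau S 0"
      using gen_riem_metric_isotropic_eigenvector[OF nondeg metric] twisted_graph_0[OF S]
      by simp
    then show "\<eta> = 0"
      by (simp add: twisted_graph_eq_iff)
  qed
  then show ?thesis
    using linear_injective_0[OF S] by blast
qed

lemma range_twisted_graph_Int_eq_0_iff:
  assumes S: "linear S" and S': "linear S'"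
  shows "range (twisted_graph B rho tau S) \<inter> range (twisted_graph B rho tau S') = {0}
    \<longleftrightarrow> (\<forall>\<eta>. S \<eta> = S' \<eta> \<longrightarrow> \<eta> = 0)"
proof
  assume disjoint: "range (twisted_graph B rho tau S) \<inter> range (twisted_graph B rho tau S') = {0}"
  show "\<forall>\<eta>. S \<eta> = S' \<eta> \<longrightarrow> \<eta> = 0"
  proof (intro allI impI)
    fix \<eta>
    assume "S \<eta> = S' \<eta>"
    then have "twisted_graph B rho tau S \<eta> = twisted_graph B rho tau S' \<eta>"
      by (simp add: twisted_graph_eq_iff)
    then have "twisted_graph B rho tau S \<eta> \<in> range (twisted_graph B rho tau S) \<inter> range (twisted_graph B rho tau S')"
      by (metis IntI rangeI)
    then have "twisted_graph B rho tau S \<eta> = twisted_graph B rho tau S 0"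
      using disjoint twisted_graph_0[OF S] by simp
    then show "\<eta> = 0"
      by (simp add: twisted_graph_eq_iff)
  qed
next
  assume kernel: "\<forall>\<eta>. S \<eta> = S' \<eta> \<longrightarrow> \<eta> = 0"
  have "\<psi> = 0" if "\<psi> \<in> range (twisted_graph B rho tau S)" "\<psi> \<in> range (twisted_graph B rho tau S')"
    for \<psi>
    using that kernel twisted_graph_0[OF S] by (auto simp: twisted_graph_eq_iff)
  moreover have "0 \<in> range (twisted_graph B rho tau S) \<inter> range (twisted_graph B rho tau S')"
    by (metis IntI rangeI twisted_graph_0 S S')
  ultimately show "range (twisted_graph B rho tau S) \<inter> range (twisted_graph B rho tau S') = {0}"
    by blast
qed

theorem range_twisted_graph_Int_eq_0_iff_bij:
  assumes S: "linear S" and S': "linear S'"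
    and iso: "isotropic B (range (twisted_graph B rho tau S))"
  shows "range (twisted_graph B rho tau S) \<inter> range (twisted_graph B rho tau S') = {0}
    \<longleftrightarrow> bij (\<lambda>\<eta>. inv S (S' \<eta>) - \<eta>)"
  using range_twisted_graph_Int_eq_0_iff[OF S S']
    bij_inv_comp_minus_id_iff[OF S isotropic_range_twisted_graph_imp_inj[OF S iso] S']
  by simp

end

theorem mainTheorem12:
  fixes M :: "'m set"
    and B :: "'m \<Rightarrow> 'e::euclidean_space \<Rightarrow> 'e \<Rightarrow> real"
    and rho :: "'m \<Rightarrow> 'e \<Rightarrow> 'a::euclidean_space"
    and tau :: "'m \<Rightarrow> 'e \<Rightarrow> 'e"
    and D D' :: "'m \<Rightarrow> 'e set"
    and S S' :: "'m \<Rightarrow> 'a \<Rightarrow> 'a"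
  assumes metric: "\<And>x. x \<in> M \<Longrightarrow> nondeg_sym_bilinear (B x)"
    and anchor: "\<And>x. x \<in> M \<Longrightarrow> linear (rho x)"
    and exact: "\<And>x. x \<in> M \<Longrightarrow> exact_fibre (B x) (rho x)"
    and genmetric: "\<And>x. x \<in> M \<Longrightarrow> gen_riem_metric (B x) (tau x)"
    and maxD: "\<And>x. x \<in> M \<Longrightarrow> max_isotropic (B x) (D x)"
    and maxD': "\<And>x. x \<in> M \<Longrightarrow> max_isotropic (B x) (D' x)"
    and linS: "\<And>x. x \<in> M \<Longrightarrow> linear (S x)"
    and linS': "\<And>x. x \<in> M \<Longrightarrow> linear (S' x)"
    and reprD: "\<And>x. x \<in> M \<Longrightarrow> D x =
        (\<lambda>eta. (anchor_dual (B x) (rho x) eta + tau x (anchor_dual (B x) (rho x) eta))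
             + (anchor_dual (B x) (rho x) (S x eta) - tau x (anchor_dual (B x) (rho x) (S x eta)))) ` UNIV"
    and reprD': "\<And>x. x \<in> M \<Longrightarrow> D' x =
        (\<lambda>eta. (anchor_dual (B x) (rho x) eta + tau x (anchor_dual (B x) (rho x) eta))
             + (anchor_dual (B x) (rho x) (S' x eta) - tau x (anchor_dual (B x) (rho x) (S' x eta)))) ` UNIV"
  shows "(\<forall>x\<in>M. D x \<inter> D' x = {0}) \<longleftrightarrow>
         (\<forall>x\<in>M. bij (\<lambda>eta. inv (S x) (S' x eta) - eta))"
proof -
  have "D x \<inter> D' x = {0} \<longleftrightarrow> bij (\<lambda>\<eta>. inv (S x) (S' x \<eta>) - \<eta>)" if "x \<in> M" for x
  proof -
    interpret exact_courant_fibre "B x" "rho x" "tau x"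
      using metric anchor exact genmetric that by (simp add: exact_courant_fibre_def)
    have D: "D x = range (twisted_graph (B x) (rho x) (tau x) (S x))"
      and D': "D' x = range (twisted_graph (B x) (rho x) (tau x) (S' x))"
      using reprD reprD' that by (simp_all add: twisted_graph_def[abs_def])
    have "isotropic (B x) (D x)"
      using maxD that by (simp add: max_isotropic_def)
    then show ?thesis
      unfolding D D' using range_twisted_graph_Int_eq_0_iff_bij linS linS' that by blast
  qed
  then show ?thesis
    by blast
qed

end
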